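(* For every $n\in\mathbb{N}$ and every $k\in\{0,1,\dots,n\}$, $|B_{n,k}|=(n+1)^{n-1}$.
   Context: For $n\in\mathbb{N}$ let $[n]=\{1,\dots,n\}$ and $PP_n=[n]^n$. Given $\alpha=(a_1,\dots,a_n)\in PP_n$ and an integer $k\ge0$, park cars $c_1,\dots,c_n$ in order on a street whose spots are indexed by all integers, initially all empty, with the unrestricted $k$-Naples rule: car $c_i$ parks at $a_i$ if empty; otherwise it checks spots $a_i-1,a_i-2,\dots,a_i-k$ in this order (including spots numbered $\le 0$) and parks in the first empty one; if all are occupied it drives east and parks in the first empty spot numbered greater than $a_i$. The set $B_{n,k}$ of contained parking functions consists of those $\alpha\in PP_n$ for which, under this process, every car parks in a spot belonging to $[n]$ (equivalently: all cars park in spots $1,\dots,n$ and no car ever occupies spot $0$ or any spot outside $[n]$). *)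

theory Defs
  imports Main
begin

text \<open>Unrestricted k-Naples parking on a street indexed by all integers.
  Given the set occ of occupied spots and a preference a, return the spot
  where the next car parks.\<close>

definition naples_spot :: "nat \<Rightarrow> int set \<Rightarrow> int \<Rightarrow> int" where
  "naples_spot k occ a =
     (if a \<notin> occ then a
      else if (\<exists>j\<in>{1..int k}. a - j \<notin> occ)
           then a - (LEAST j. j \<in> {1..int k} \<and> a - j \<notin> occ)
      else (LEAST s. s > a \<and> s \<notin> occ))"

fun naples_park :: "nat \<Rightarrow> int set \<Rightarrow> int list \<Rightarrow> int list" where
  "naples_park k occ [] = []"
| "naples_park k occ (a # as) =
     (let s = naples_spot k occ a in s # naples_park k (insert s occ) as)"

definition PP :: "nat \<Rightarrow> int list set" where
  "PP n = {\<alpha>. length \<alpha> = n \<and> (\<forall>a\<in>set \<alpha>. 1 \<le> a \<and> a \<le> int n)}"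

definition B :: "nat \<Rightarrow> nat \<Rightarrow> int list set" where
  "B n k = {\<alpha> \<in> PP n. \<forall>s\<in>set (naples_park k {} \<alpha>). 1 \<le> s \<and> s \<le> int n}"

end

theory Submission
  imports Defs
begin

text \<open>Pollak's circle argument. Glue the two ends of the street onto one extra spot 0,
  giving a circle of n + 1 spots on which a car backs up cyclically and then drives on
  cyclically. For preferences in [n], as long as no car has left [n] the two processes place
  every car on the same spot, and a car that leaves [n] on the street (westward to a spot
  \<open>\<le> 0\<close> or eastward to n + 1) lands on spot 0 of the circle. Hence B n k consists of the
  preference lists on the circle that leave spot 0 empty; a preference 0 would fill spot 0,
  so these automatically lie in [n]. On the circle every one of the (n + 1)^n lists parks all
  cars and leaves exactly one spot empty, and rotating all preferences rotates the outcome,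
  so each of the n + 1 spots is the empty one equally often.\<close>

lemma int_Least_bounded_below:
  fixes P :: "int \<Rightarrow> bool"
  assumes "P x" and bounded: "\<And>y. P y \<Longrightarrow> b \<le> y"
  shows "P (LEAST y. P y) \<and> (\<forall>y. P y \<longrightarrow> (LEAST y. P y) \<le> y)"
proof -
  define n0 where "n0 = (LEAST n::nat. P (b + int n))"
  have "P (b + int (nat (x - b)))" using assms by force
  hence least: "P (b + int n0)" unfolding n0_def by (rule LeastI)
  have minimal: "b + int n0 \<le> y" if "P y" for y
  proof -
    have "b \<le> y" using bounded that .
    hence "P (b + int (nat (y - b)))" using that by simp
    hence "n0 \<le> nat (y - b)" unfolding n0_def by (rule Least_le)
    thus ?thesis using \<open>b \<le> y\<close> by linarith
  qed
  have "(LEAST y. P y) = b + int n0" by (rule Least_equality) (use least minimal in auto)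
  thus ?thesis using least minimal by simp
qed

definition circ_spot :: "int \<Rightarrow> nat \<Rightarrow> int set \<Rightarrow> int \<Rightarrow> int" where
  "circ_spot m k occ a =
     (if a mod m \<notin> occ then a mod m
      else if (\<exists>j\<in>{1..int k}. (a - j) mod m \<notin> occ)
           then (a - (LEAST j. j \<in> {1..int k} \<and> (a - j) mod m \<notin> occ)) mod m
      else (a + (LEAST j. j > 0 \<and> (a + j) mod m \<notin> occ)) mod m)"

fun circ_park :: "int \<Rightarrow> nat \<Rightarrow> int set \<Rightarrow> int list \<Rightarrow> int list" where
  "circ_park m k occ [] = []"
| "circ_park m k occ (a # as) =
     (let s = circ_spot m k occ a in s # circ_park m k (insert s occ) as)"

lemma circ_spot_in_range: "0 < m \<Longrightarrow> circ_spot m k occ a \<in> {0..<m}"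
  unfolding circ_spot_def by auto

lemma circ_park_subset: "0 < m \<Longrightarrow> set (circ_park m k occ as) \<subseteq> {0..<m}"
proof (induction as arbitrary: occ)
  case (Cons a as)
  then show ?case using circ_spot_in_range[of m k occ a] by (auto simp: Let_def)
qed simp

lemma length_circ_park: "length (circ_park m k occ as) = length as"
  by (induction as arbitrary: occ) (auto simp: Let_def)

lemma circ_spot_mod: "circ_spot m k occ (a mod m) = circ_spot m k occ a"
proof -
  have "(a mod m - j) mod m = (a - j) mod m" "(a mod m + j) mod m = (a + j) mod m" for j
    by (simp_all add: mod_diff_left_eq mod_add_left_eq)
  then show ?thesis by (simp only: circ_spot_def mod_mod_trivial)
qed

lemma circ_spot_not_occupied:
  assumes m: "0 < m" and occ: "occ \<subseteq> {0..<m}" and not_full: "int (card occ) < m"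
  shows "circ_spot m k occ a \<notin> occ"
proof -
  consider (vacant) "a mod m \<notin> occ"
    | (backward) "a mod m \<in> occ" "\<exists>j\<in>{1..int k}. (a - j) mod m \<notin> occ"
    | (eastward) "a mod m \<in> occ" "\<not> (\<exists>j\<in>{1..int k}. (a - j) mod m \<notin> occ)"
    by blast
  then show ?thesis
  proof cases
    case vacant then show ?thesis unfolding circ_spot_def by simp
  next
    case backward
    then obtain j where "j \<in> {1..int k}" "(a - j) mod m \<notin> occ" by blast
    then have "(a - (LEAST j. j \<in> {1..int k} \<and> (a - j) mod m \<notin> occ)) mod m \<notin> occ"
      using int_Least_bounded_below[of "\<lambda>j. j \<in> {1..int k} \<and> (a - j) mod m \<notin> occ" j 1]
      by auto
    then show ?thesis using backward unfolding circ_spot_def by simp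
  next
    case eastward
    have "card occ < card {0..<m}" using not_full m by simp
    then have "occ \<noteq> {0..<m}" by auto
    then obtain r where r: "r \<in> {0..<m}" "r \<notin> occ" using occ by blast
    define j where "j = (r - a) mod m"
    have "(a + j) mod m = (a + (r - a)) mod m" unfolding j_def by (rule mod_add_right_eq)
    then have hit: "(a + j) mod m = r" using r by simp
    have "j \<noteq> 0" using hit eastward r by auto
    moreover have "0 \<le> j" unfolding j_def using m by simp
    ultimately have "0 < j \<and> (a + j) mod m \<notin> occ" using hit r by simp
    then have "(a + (LEAST j. 0 < j \<and> (a + j) mod m \<notin> occ)) mod m \<notin> occ"
      using int_Least_bounded_below[of "\<lambda>j. 0 < j \<and> (a + j) mod m \<notin> occ" j 1] by auto
    then show ?thesis using eastward unfolding circ_spot_def by simp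
  qed
qed

lemma distinct_circ_park:
  "0 < m \<Longrightarrow> occ \<subseteq> {0..<m} \<Longrightarrow> int (card occ) + int (length as) \<le> m \<Longrightarrow>
   distinct (circ_park m k occ as) \<and> set (circ_park m k occ as) \<inter> occ = {}"
proof (induction as arbitrary: occ)
  case Nil then show ?case by simp
next
  case (Cons a as)
  let ?s = "circ_spot m k occ a"
  have "finite occ" using Cons.prems finite_subset by blast
  moreover have "?s \<notin> occ" using Cons.prems by (intro circ_spot_not_occupied) auto
  moreover have "?s \<in> {0..<m}" using Cons.prems circ_spot_in_range by blast
  ultimately have "distinct (circ_park m k (insert ?s occ) as)"
    "set (circ_park m k (insert ?s occ) as) \<inter> insert ?s occ = {}"
    using Cons.IH[of "insert ?s occ"] Cons.prems by auto
  then show ?case using \<open>?s \<notin> occ\<close> by (auto simp: Let_def)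
qed

lemma preferred_spot_occupied:
  "e \<in> set as \<Longrightarrow> e \<in> {0..<m} \<Longrightarrow> e \<in> occ \<union> set (circ_park m k occ as)"
proof (induction as arbitrary: occ)
  case (Cons a as)
  show ?case
  proof (cases "a = e")
    case True
    then show ?thesis using Cons.prems by (auto simp: Let_def circ_spot_def)
  next
    case False
    then show ?thesis using Cons.IH[of "insert (circ_spot m k occ a) occ"] Cons.prems
      by (auto simp: Let_def)
  qed
qed simp

definition circ_rotate :: "int \<Rightarrow> int \<Rightarrow> int \<Rightarrow> int" where
  "circ_rotate m c x = (x + c) mod m"

lemma circ_rotate_inverse: "circ_rotate m (- c) (circ_rotate m c x) = x mod m"
  by (simp add: circ_rotate_def mod_diff_left_eq)

lemma inj_on_circ_rotate: "inj_on (circ_rotate m c) {0..<m}"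
proof
  fix p q assume "p \<in> {0..<m}" "q \<in> {0..<m}" and eq: "circ_rotate m c p = circ_rotate m c q"
  have "p = p mod m" using \<open>p \<in> {0..<m}\<close> by simp
  also have "\<dots> = circ_rotate m (- c) (circ_rotate m c q)" unfolding eq[symmetric] circ_rotate_inverse ..
  also have "\<dots> = q" using \<open>q \<in> {0..<m}\<close> unfolding circ_rotate_inverse by simp
  finally show "p = q" .
qed

lemma mod_mem_circ_rotate_image:
  assumes "occ \<subseteq> {0..<m}"
  shows "y mod m \<in> circ_rotate m c ` occ \<longleftrightarrow> (y - c) mod m \<in> occ"
proof
  assume "y mod m \<in> circ_rotate m c ` occ"
  then obtain q where q: "q \<in> occ" "circ_rotate m c q = y mod m" by auto
  have "(y - c) mod m = (y mod m - c) mod m" by (simp add: mod_diff_left_eq)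
  also have "\<dots> = q mod m" using circ_rotate_inverse[of m c q] q(2) by (simp add: circ_rotate_def)
  finally have "(y - c) mod m = q mod m" .
  then show "(y - c) mod m \<in> occ" using q assms by auto
next
  assume "(y - c) mod m \<in> occ"
  moreover have "circ_rotate m c ((y - c) mod m) = y mod m"
    by (simp add: circ_rotate_def mod_add_left_eq)
  ultimately show "y mod m \<in> circ_rotate m c ` occ" by (metis image_eqI)
qed

lemma circ_spot_rotate:
  assumes "occ \<subseteq> {0..<m}"
  shows "circ_spot m k (circ_rotate m c ` occ) (circ_rotate m c a) =
    circ_rotate m c (circ_spot m k occ a)"
proof -
  have ahead: "(a + c + j) mod m \<in> circ_rotate m c ` occ \<longleftrightarrow> (a + j) mod m \<in> occ" for j
    using mod_mem_circ_rotate_image[OF assms, of "a + c + j" c] by (simp add: algebra_simps)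
  have at: "(a + c) mod m \<in> circ_rotate m c ` occ \<longleftrightarrow> a mod m \<in> occ"
    using ahead[of 0] by simp
  have behind: "(a + c - j) mod m \<in> circ_rotate m c ` occ \<longleftrightarrow> (a - j) mod m \<in> occ" for j
    using ahead[of "- j"] by simp
  have reorder: "a + c - j = a - j + c" "a + c + j = a + j + c" for j by simp_all
  show ?thesis
    unfolding circ_rotate_def[of m c a] circ_spot_mod
    unfolding circ_spot_def at behind ahead circ_rotate_def mod_add_left_eq
    by (simp only: reorder) (simp add: mod_add_left_eq)
qed

lemma circ_park_rotate:
  "0 < m \<Longrightarrow> occ \<subseteq> {0..<m} \<Longrightarrow>
   circ_park m k (circ_rotate m c ` occ) (map (circ_rotate m c) as) =
   map (circ_rotate m c) (circ_park m k occ as)"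
proof (induction as arbitrary: occ)
  case (Cons a as)
  have "insert (circ_spot m k occ a) occ \<subseteq> {0..<m}"
    using Cons.prems circ_spot_in_range by auto
  then show ?case
    using Cons.IH[of "insert (circ_spot m k occ a) occ"] circ_spot_rotate[OF Cons.prems(2)]
    by (simp add: Let_def)
qed simp

lemma naples_spot_backward:
  assumes a: "1 \<le> a" "a \<le> int n" and occ: "occ \<subseteq> {1..int n}"
    and taken: "a \<in> occ" and gap: "\<exists>j\<in>{1..int k}. a - j \<notin> occ"
  shows "0 \<le> naples_spot k occ a \<and> naples_spot k occ a < a \<and>
    circ_spot (int n + 1) k occ a = naples_spot k occ a"
proof -
  let ?m = "int n + 1"
  define P where "P j \<longleftrightarrow> j \<in> {1..int k} \<and> a - j \<notin> occ" for j
  define Q where "Q j \<longleftrightarrow> j \<in> {1..int k} \<and> (a - j) mod ?m \<notin> occ" for j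
  have same_below_a: "P j \<longleftrightarrow> Q j" if "j \<le> a" for j
    using that a unfolding P_def Q_def by auto
  obtain j1 where "P j1" using gap P_def by auto
  define j0 where "j0 = (LEAST j. P j)"
  have j0: "P j0" "\<And>y. P y \<Longrightarrow> j0 \<le> y"
    using int_Least_bounded_below[of P j1 1] \<open>P j1\<close> unfolding j0_def P_def by auto
  \<comment> \<open>Spot 0 is never occupied, so the backward search stops by position 0.\<close>
  have "j0 \<le> a"
  proof (cases "j1 \<le> a")
    case False
    then have "P a" using \<open>P j1\<close> a occ unfolding P_def by auto
    then show ?thesis using j0(2) by blast
  qed (use j0(2) \<open>P j1\<close> in force)
  have "(LEAST j. Q j) = j0"
  proof (rule Least_equality)
    show "Q j0" using same_below_a \<open>j0 \<le> a\<close> j0(1) by blast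
    show "j0 \<le> y" if "Q y" for y
      using same_below_a[of y] \<open>j0 \<le> a\<close> that j0(2) by fastforce
  qed
  moreover have "\<exists>j\<in>{1..int k}. (a - j) mod ?m \<notin> occ"
    using same_below_a \<open>j0 \<le> a\<close> j0(1) unfolding P_def Q_def by blast
  moreover have "1 \<le> j0" using j0(1) P_def by simp
  moreover have "naples_spot k occ a = a - j0"
    unfolding naples_spot_def j0_def P_def using taken gap by simp
  ultimately show ?thesis
    using taken a \<open>j0 \<le> a\<close> unfolding circ_spot_def Q_def by simp
qed

lemma naples_spot_eastward:
  assumes a: "1 \<le> a" "a \<le> int n" and occ: "occ \<subseteq> {1..int n}"
    and taken: "a \<in> occ" and no_gap: "\<not> (\<exists>j\<in>{1..int k}. a - j \<notin> occ)"
  shows "a < naples_spot k occ a \<and> naples_spot k occ a \<le> int n + 1 \<and>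
    circ_spot (int n + 1) k occ a = naples_spot k occ a mod (int n + 1)"
proof -
  let ?m = "int n + 1"
  have no_circ_gap: "\<not> (\<exists>j\<in>{1..int k}. (a - j) mod ?m \<notin> occ)"
  proof
    assume "\<exists>j\<in>{1..int k}. (a - j) mod ?m \<notin> occ"
    then obtain j where j: "j \<in> {1..int k}" "(a - j) mod ?m \<notin> occ" by blast
    then have "a - j \<in> {1..int n}" using no_gap occ by blast
    then show False using j no_gap by simp
  qed
  define R where "R x \<longleftrightarrow> a < x \<and> x \<notin> occ" for x
  define s where "s = (LEAST x. R x)"
  have "R s \<and> (\<forall>y. R y \<longrightarrow> s \<le> y)" unfolding s_def
    by (rule int_Least_bounded_below[where x = "int n + 1" and b = "a + 1"]) (use a occ R_def in auto)
  then have s: "R s" "\<And>y. R y \<Longrightarrow> s \<le> y" by auto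
  have "s \<le> ?m" using s(2) a occ R_def by force
  define Q where "Q j \<longleftrightarrow> 0 < j \<and> (a + j) mod ?m \<notin> occ" for j
  have "(LEAST j. Q j) = s - a"
  proof (rule Least_equality)
    show "Q (s - a)"
      using s(1) \<open>s \<le> ?m\<close> occ a unfolding Q_def R_def by (cases "s = ?m") auto
    show "s - a \<le> y" if "Q y" for y
    proof (rule ccontr)
      assume "\<not> s - a \<le> y"
      then have "R (a + y)" using that \<open>s \<le> ?m\<close> a unfolding Q_def R_def by auto
      then show False using s(2) \<open>\<not> s - a \<le> y\<close> by force
    qed
  qed
  moreover have "naples_spot k occ a = s"
    unfolding naples_spot_def s_def R_def using taken no_gap by simp
  ultimately show ?thesis
    using taken no_circ_gap s(1) \<open>s \<le> ?m\<close> a unfolding circ_spot_def Q_def R_def by simp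
qed

lemma circ_spot_eq_naples_spot_mod:
  assumes a: "1 \<le> a" "a \<le> int n" and occ: "occ \<subseteq> {1..int n}"
  shows "0 \<le> naples_spot k occ a \<and> naples_spot k occ a \<le> int n + 1 \<and>
    circ_spot (int n + 1) k occ a = naples_spot k occ a mod (int n + 1)"
proof (cases "a \<in> occ")
  case False
  then show ?thesis using a unfolding naples_spot_def circ_spot_def by simp
next
  case True
  show ?thesis
  proof (cases "\<exists>j\<in>{1..int k}. a - j \<notin> occ")
    case gap: True
    then show ?thesis using naples_spot_backward[OF a occ True gap] a by simp
  next
    case False
    then show ?thesis using naples_spot_eastward[OF a occ True False] a by simp
  qed
qed

lemma naples_contained_iff_circ_avoids_zero:
  "occ \<subseteq> {1..int n} \<Longrightarrow> set \<alpha> \<subseteq> {1..int n} \<Longrightarrow>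
    (\<forall>s\<in>set (naples_park k occ \<alpha>). 1 \<le> s \<and> s \<le> int n) \<longleftrightarrow>
    0 \<notin> set (circ_park (int n + 1) k occ \<alpha>)"
proof (induction \<alpha> arbitrary: occ)
  case (Cons a as)
  let ?s = "naples_spot k occ a"
  have s: "0 \<le> ?s" "?s \<le> int n + 1" "circ_spot (int n + 1) k occ a = ?s mod (int n + 1)"
    using circ_spot_eq_naples_spot_mod[of a n occ k] Cons.prems by auto
  show ?case
  proof (cases "1 \<le> ?s \<and> ?s \<le> int n")
    case True
    then have "insert ?s occ \<subseteq> {1..int n}" using Cons.prems by auto
    then show ?thesis using Cons.IH Cons.prems True s by (simp add: Let_def)
  next
    case False
    then have "?s = 0 \<or> ?s = int n + 1" using s by auto
    then show ?thesis using False s by (auto simp: Let_def)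
  qed
qed simp

definition circ_prefs :: "int \<Rightarrow> nat \<Rightarrow> int list set" where
  "circ_prefs m n = {xs. set xs \<subseteq> {0..<m} \<and> length xs = n}"

definition circ_avoiding :: "int \<Rightarrow> nat \<Rightarrow> nat \<Rightarrow> int \<Rightarrow> int list set" where
  "circ_avoiding m n k e = {xs \<in> circ_prefs m n. e \<notin> set (circ_park m k {} xs)}"

lemma finite_circ_prefs: "finite (circ_prefs m n)"
  unfolding circ_prefs_def by (rule finite_lists_length_eq) simp

lemma card_circ_prefs: "card (circ_prefs m n) = nat m ^ n"
  unfolding circ_prefs_def by (simp add: card_lists_length_eq)

lemma card_circ_empty_spots:
  assumes "0 < m" "int n \<le> m" "xs \<in> circ_prefs m n"
  shows "card ({0..<m} - set (circ_park m k {} xs)) = nat m - n"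
proof -
  have "distinct (circ_park m k {} xs)"
    using distinct_circ_park[of m "{}" xs k] assms unfolding circ_prefs_def by simp
  then have "card (set (circ_park m k {} xs)) = n"
    using assms(3) unfolding circ_prefs_def by (simp add: distinct_card length_circ_park)
  then show ?thesis using circ_park_subset[OF assms(1)] by (simp add: card_Diff_subset)
qed

lemma sum_card_circ_avoiding:
  assumes "0 < m" "int n \<le> m"
  shows "(\<Sum>e\<in>{0..<m}. card (circ_avoiding m n k e)) = (nat m - n) * nat m ^ n"
proof -
  have "(\<Sum>e\<in>{0..<m}. card (circ_avoiding m n k e)) =
      (\<Sum>e\<in>{0..<m}. \<Sum>xs\<in>circ_prefs m n. if e \<notin> set (circ_park m k {} xs) then 1 else 0)"
    unfolding circ_avoiding_def using finite_circ_prefs by (simp add: sum.If_cases Int_def)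
  also have "\<dots> = (\<Sum>xs\<in>circ_prefs m n. card ({0..<m} - set (circ_park m k {} xs)))"
    by (subst sum.swap) (simp add: sum.If_cases Diff_eq Compl_eq)
  also have "\<dots> = (\<Sum>xs\<in>circ_prefs m n. nat m - n)"
    using card_circ_empty_spots[OF assms] by simp
  finally show ?thesis by (simp add: card_circ_prefs)
qed

lemma map_circ_rotate_circ_avoiding:
  assumes "0 < m" "xs \<in> circ_avoiding m n k e" "e \<in> {0..<m}"
  shows "map (circ_rotate m c) xs \<in> circ_avoiding m n k (circ_rotate m c e)"
proof -
  have "circ_park m k {} (map (circ_rotate m c) xs) = map (circ_rotate m c) (circ_park m k {} xs)"
    using circ_park_rotate[OF assms(1), of "{}" k c xs] by simp
  moreover have "circ_rotate m c e \<notin> circ_rotate m c ` set (circ_park m k {} xs)"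
    using assms inj_on_circ_rotate[of m c] circ_park_subset[OF assms(1)]
    unfolding circ_avoiding_def by (subst inj_on_image_mem_iff) auto
  ultimately show ?thesis
    using assms unfolding circ_avoiding_def circ_prefs_def by (auto simp: circ_rotate_def)
qed

lemma card_circ_avoiding_eq:
  assumes "0 < m" "e \<in> {0..<m}"
  shows "card (circ_avoiding m n k e) = card (circ_avoiding m n k 0)"
proof -
  have undo: "map (circ_rotate m (- c)) (map (circ_rotate m c) xs) = xs"
    if "xs \<in> circ_avoiding m n k d" for xs c d
  proof -
    have "set xs \<subseteq> {0..<m}" using that unfolding circ_avoiding_def circ_prefs_def by simp
    then show ?thesis by (induction xs) (auto simp: circ_rotate_inverse)
  qed
  have "bij_betw (map (circ_rotate m e)) (circ_avoiding m n k 0) (circ_avoiding m n k e)"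
  proof (rule bij_betw_byWitness[where f' = "map (circ_rotate m (- e))"])
    show "\<forall>xs\<in>circ_avoiding m n k 0. map (circ_rotate m (- e)) (map (circ_rotate m e) xs) = xs"
      using undo by blast
    show "\<forall>xs\<in>circ_avoiding m n k e. map (circ_rotate m e) (map (circ_rotate m (- e)) xs) = xs"
      using undo[of _ _ "- e"] by simp
    have "circ_rotate m e 0 = e" using assms(2) by (simp add: circ_rotate_def)
    then show "map (circ_rotate m e) ` circ_avoiding m n k 0 \<subseteq> circ_avoiding m n k e"
      using map_circ_rotate_circ_avoiding[OF assms(1), of _ n k 0 e] assms(1) by auto
    have "circ_rotate m (- e) e = 0" by (simp add: circ_rotate_def)
    then show "map (circ_rotate m (- e)) ` circ_avoiding m n k e \<subseteq> circ_avoiding m n k 0"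
      using map_circ_rotate_circ_avoiding[OF assms(1), of _ n k e "- e"] assms(2) by auto
  qed
  then show ?thesis by (simp add: bij_betw_same_card)
qed

lemma card_circ_avoiding_zero:
  assumes "0 < m" "int n \<le> m"
  shows "nat m * card (circ_avoiding m n k 0) = (nat m - n) * nat m ^ n"
proof -
  have "(\<Sum>e\<in>{0..<m}. card (circ_avoiding m n k e)) = (\<Sum>e\<in>{0..<m}. card (circ_avoiding m n k 0))"
    using card_circ_avoiding_eq[OF assms(1)] by (rule sum.cong[OF refl])
  then show ?thesis using sum_card_circ_avoiding[OF assms] by simp
qed

lemma B_eq_circ_avoiding_zero: "B n k = circ_avoiding (int n + 1) n k 0"
proof (intro set_eqI iffI)
  fix xs assume "xs \<in> B n k"
  then have "length xs = n" "set xs \<subseteq> {1..int n}"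
    "\<forall>s\<in>set (naples_park k {} xs). 1 \<le> s \<and> s \<le> int n"
    unfolding B_def PP_def by auto
  then show "xs \<in> circ_avoiding (int n + 1) n k 0"
    using naples_contained_iff_circ_avoids_zero[of "{}" n xs k]
    unfolding circ_avoiding_def circ_prefs_def by auto
next
  fix xs assume "xs \<in> circ_avoiding (int n + 1) n k 0"
  then have xs: "length xs = n" "set xs \<subseteq> {0..<int n + 1}"
    and avoids_zero: "0 \<notin> set (circ_park (int n + 1) k {} xs)"
    unfolding circ_avoiding_def circ_prefs_def by auto
  have "0 \<notin> set xs" using preferred_spot_occupied[of 0 xs "int n + 1" "{}" k] avoids_zero by auto
  then have "set xs \<subseteq> {0..<int n + 1} - {0}" using xs(2) by blast
  also have "\<dots> = {1..int n}" by auto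
  finally have "set xs \<subseteq> {1..int n}" .
  then show "xs \<in> B n k"
    using naples_contained_iff_circ_avoids_zero[of "{}" n xs k] xs(1) avoids_zero
    unfolding B_def PP_def by auto
qed

theorem lemma3p3:
  fixes n k :: nat
  assumes "k \<le> n"
  shows "card (B n k) = (n + 1) ^ (n - 1)"
proof -
  have "nat (int n + 1) = n + 1" by simp
  then have "(n + 1) * card (B n k) = (n + 1) ^ n"
    using card_circ_avoiding_zero[of "int n + 1" n k] unfolding B_eq_circ_avoiding_zero by simp
  also have "\<dots> = (n + 1) * (n + 1) ^ (n - 1)" by (cases n) simp_all
  finally show ?thesis by (simp only: mult_left_cancel)
qed

end
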